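(* Let $X$ be a Banach space, $n\in\mathbb{N}$, and $S\in\mathrm{Lip}_0(X)$. Define $T\in\mathrm{Lip}_0(\ell_1^n(X))$ by $T(x_1,\dots,x_n)=(Sx_1,\dots,Sx_n)$. Then $\omega(T)=\omega(S)$.
   Context: $\ell_1^n(X)$ is $X^n$ with norm $\|(x_1,\dots,x_n)\|=\sum_{i=1}^n\|x_i\|$. For a Banach space $E$: $\mathrm{Lip}_0(E)$ is the set of Lipschitz maps $T:E\to E$ with $T(0)=0$; $D(x)=\{x^*\in E^*: x^*(x)=\|x^*\|\|x\|=\|x\|^2\}$; $\omega(T)=\sup\{|f(Tx-Ty)|/\|x-y\|^2: x,y\in E,\ x\neq y,\ f\in D(x-y)\}$. *)

theory Defs
  imports "HOL-Analysis.Analysis"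
begin

definition Lip0 :: "('a::real_normed_vector \<Rightarrow> 'a) set" where
  "Lip0 = {S. (\<exists>C. C-lipschitz_on UNIV S) \<and> S 0 = 0}"

definition Dset :: "'a::real_normed_vector \<Rightarrow> ('a \<Rightarrow> real) set" where
  "Dset x = {f. bounded_linear f \<and> f x = onorm f * norm x \<and> f x = (norm x)^2}"

definition omega :: "('a::real_normed_vector \<Rightarrow> 'a) \<Rightarrow> real" where
  "omega T = Sup {\<bar>f (T x - T y)\<bar> / (norm (x - y))^2 | x y f. x \<noteq> y \<and> f \<in> Dset (x - y)}"

section \<open>The space l_1^n(X), realized as functions nat => X vanishing from index n on\<close>

definition l1_carrier :: "nat \<Rightarrow> (nat \<Rightarrow> 'a::real_normed_vector) set" where
  "l1_carrier n = {x. \<forall>i\<ge>n. x i = 0}"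

definition l1_norm :: "nat \<Rightarrow> (nat \<Rightarrow> 'a::real_normed_vector) \<Rightarrow> real" where
  "l1_norm n x = (\<Sum>i<n. norm (x i))"

definition l1_diff :: "(nat \<Rightarrow> 'a::real_normed_vector) \<Rightarrow> (nat \<Rightarrow> 'a) \<Rightarrow> (nat \<Rightarrow> 'a)" where
  "l1_diff x y = (\<lambda>i. x i - y i)"

definition l1_dual :: "nat \<Rightarrow> ((nat \<Rightarrow> 'a::real_normed_vector) \<Rightarrow> real) set" where
  "l1_dual n = {f.
     (\<forall>x\<in>l1_carrier n. \<forall>y\<in>l1_carrier n. f (\<lambda>i. x i + y i) = f x + f y) \<and>
     (\<forall>x\<in>l1_carrier n. \<forall>c. f (\<lambda>i. c *\<^sub>R x i) = c * f x) \<and>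
     (\<exists>K. \<forall>x\<in>l1_carrier n. \<bar>f x\<bar> \<le> K * l1_norm n x)}"

definition l1_dual_norm :: "nat \<Rightarrow> ((nat \<Rightarrow> 'a::real_normed_vector) \<Rightarrow> real) \<Rightarrow> real" where
  "l1_dual_norm n f = Sup {\<bar>f x\<bar> | x. x \<in> l1_carrier n \<and> l1_norm n x \<le> 1}"

definition l1_Dset :: "nat \<Rightarrow> (nat \<Rightarrow> 'a::real_normed_vector) \<Rightarrow> ((nat \<Rightarrow> 'a) \<Rightarrow> real) set" where
  "l1_Dset n x = {f. f \<in> l1_dual n \<and> f x = l1_dual_norm n f * l1_norm n x \<and> f x = (l1_norm n x)^2}"

definition l1_omega :: "nat \<Rightarrow> ((nat \<Rightarrow> 'a::real_normed_vector) \<Rightarrow> (nat \<Rightarrow> 'a)) \<Rightarrow> real" where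
  "l1_omega n T = Sup {\<bar>f (l1_diff (T x) (T y))\<bar> / (l1_norm n (l1_diff x y))^2 | x y f.
      x \<in> l1_carrier n \<and> y \<in> l1_carrier n \<and> x \<noteq> y \<and> f \<in> l1_Dset n (l1_diff x y)}"

definition diag_map :: "nat \<Rightarrow> ('a::real_normed_vector \<Rightarrow> 'a) \<Rightarrow> (nat \<Rightarrow> 'a) \<Rightarrow> (nat \<Rightarrow> 'a)" where
  "diag_map n S x = (\<lambda>i. if i < n then S (x i) else 0)"

end

theory Submission
  imports Defs
begin

(*
  Write A(S) for the set of ratios |f(Sx - Sy)| / ||x - y||^2 whose
  supremum is omega(S), and A(T) for the analogous set of T = diag_map n S on
  l_1^n(X).  We show
   (1) A(S) is a subset of A(T): a pair a, b in X together with a norming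
       functional g of a - b becomes the pair of vectors (a,0,...,0), (b,0,...,0)
       together with the norming functional w |-> g (w 0);
   (2) every upper bound M of A(S) bounds A(T): a norming functional f of
       z = x - y in l_1^n(X) attains its norm on every coordinate, so its
       restriction to the i-th coordinate, rescaled by ||z_i|| / ||z||, is a
       norming functional of z_i in X; hence f contributes at most
       M ||z|| ||z_i|| on coordinate i, and summing gives M ||z||^2;
   (3) A(S) is bounded above by a Lipschitz constant of S.
  A general lemma on suprema of real sets then yields omega(T) = omega(S).
*)

definition omega_ratios :: "('a::real_normed_vector \<Rightarrow> 'a) \<Rightarrow> real set" where
  "omega_ratios S =
     {\<bar>f (S x - S y)\<bar> / (norm (x - y))^2 | x y f. x \<noteq> y \<and> f \<in> Dset (x - y)}"

definition l1_omega_ratios ::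
    "nat \<Rightarrow> ((nat \<Rightarrow> 'a::real_normed_vector) \<Rightarrow> (nat \<Rightarrow> 'a)) \<Rightarrow> real set" where
  "l1_omega_ratios n T =
     {\<bar>f (l1_diff (T x) (T y))\<bar> / (l1_norm n (l1_diff x y))^2 | x y f.
        x \<in> l1_carrier n \<and> y \<in> l1_carrier n \<and> x \<noteq> y \<and> f \<in> l1_Dset n (l1_diff x y)}"

lemma omega_eq_Sup: "omega S = Sup (omega_ratios S)"
  by (simp add: omega_def omega_ratios_def)

lemma l1_omega_eq_Sup: "l1_omega n T = Sup (l1_omega_ratios n T)"
  by (simp add: l1_omega_def l1_omega_ratios_def)

lemma Sup_eq_if_same_upper_bounds:
  fixes A B :: "real set"
  assumes sub: "A \<subseteq> B" and bdd: "bdd_above A"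
    and bounds: "\<And>M. \<forall>a\<in>A. a \<le> M \<Longrightarrow> \<forall>b\<in>B. b \<le> M"
  shows "Sup A = Sup B"
proof (cases "B = {}")
  case True
  then show ?thesis using sub by simp
next
  case False
  then obtain b where b: "b \<in> B" by blast
  have "A \<noteq> {}"
  proof
    assume "A = {}"
    then have "b \<le> b - 1" using bounds[of "b - 1"] b by blast
    then show False by simp
  qed
  have B_le: "\<forall>b\<in>B. b \<le> Sup A"
    using bounds cSup_upper[OF _ bdd] by blast
  then have "bdd_above B" by (auto intro: bdd_aboveI)
  then have "Sup A \<le> Sup B" using cSup_subset_mono[OF \<open>A \<noteq> {}\<close> _ sub] by blast
  moreover have "Sup B \<le> Sup A" using cSup_least[OF False] B_le by blast
  ultimately show ?thesis by simp
qed

definition single :: "nat \<Rightarrow> 'a::real_normed_vector \<Rightarrow> nat \<Rightarrow> 'a" where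
  "single i v = (\<lambda>j. if j = i then v else 0)"

lemma single_in_carrier: "i < n \<Longrightarrow> single i v \<in> l1_carrier n"
  by (auto simp: single_def l1_carrier_def)

lemma l1_norm_single: "i < n \<Longrightarrow> l1_norm n (single i v) = norm v"
  by (simp add: l1_norm_def single_def if_distrib sum.delta cong: if_cong)

lemma l1_norm_nonneg: "0 \<le> l1_norm n x"
  by (simp add: l1_norm_def sum_nonneg)

lemma norm_coordinate_le_l1_norm: "i < n \<Longrightarrow> norm (x i) \<le> l1_norm n x"
  unfolding l1_norm_def by (rule member_le_sum) auto

lemma l1_norm_eq_0:
  assumes "x \<in> l1_carrier n" and "l1_norm n x = 0"
  shows "x = (\<lambda>i. 0)"
proof
  fix i
  show "x i = 0"
  proof (cases "i < n")
    case True
    then show ?thesis using norm_coordinate_le_l1_norm[of i n x] assms(2) by simp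
  next
    case False
    then show ?thesis using assms(1) by (simp add: l1_carrier_def)
  qed
qed

lemma l1_dual_add:
  "f \<in> l1_dual n \<Longrightarrow> x \<in> l1_carrier n \<Longrightarrow> y \<in> l1_carrier n \<Longrightarrow>
     f (\<lambda>i. x i + y i) = f x + f y"
  by (simp add: l1_dual_def)

lemma l1_dual_scale:
  "f \<in> l1_dual n \<Longrightarrow> x \<in> l1_carrier n \<Longrightarrow> f (\<lambda>i. c *\<^sub>R x i) = c * f x"
  by (simp add: l1_dual_def)

lemma l1_dual_zero: "f \<in> l1_dual n \<Longrightarrow> f (\<lambda>i. 0) = 0"
  using l1_dual_scale[of f n "\<lambda>i. 0" 0] by (simp add: l1_carrier_def)

lemma l1_dual_single_add:
  assumes "f \<in> l1_dual n" and "i < n"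
  shows "f (single i (a + b)) = f (single i a) + f (single i b)"
proof -
  have "single i (a + b) = (\<lambda>j. single i a j + single i b j)"
    by (auto simp: single_def)
  then show ?thesis using l1_dual_add[OF assms(1) single_in_carrier single_in_carrier] assms(2)
    by simp
qed

lemma l1_dual_single_scale:
  assumes "f \<in> l1_dual n" and "i < n"
  shows "f (single i (c *\<^sub>R a)) = c * f (single i a)"
proof -
  have "single i (c *\<^sub>R a) = (\<lambda>j. c *\<^sub>R single i a j)"
    by (auto simp: single_def)
  then show ?thesis using l1_dual_scale[OF assms(1) single_in_carrier[OF assms(2)]] by simp
qed

lemma l1_dual_single_zero: "f \<in> l1_dual n \<Longrightarrow> i < n \<Longrightarrow> f (single i 0) = 0"
  using l1_dual_single_scale[of f n i 0 0] by simp

lemma l1_dual_bound: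
  assumes f: "f \<in> l1_dual n" and u: "u \<in> l1_carrier n"
  shows "\<bar>f u\<bar> \<le> l1_dual_norm n f * l1_norm n u"
proof (cases "l1_norm n u = 0")
  case True
  then show ?thesis using l1_norm_eq_0[OF u] l1_dual_zero[OF f] by simp
next
  case False
  define A where "A = {\<bar>f x\<bar> | x. x \<in> l1_carrier n \<and> l1_norm n x \<le> 1}"
  obtain K where K: "\<forall>x\<in>l1_carrier n. \<bar>f x\<bar> \<le> K * l1_norm n x"
    using f by (auto simp: l1_dual_def)
  have "a \<le> max K 0" if "a \<in> A" for a
  proof -
    obtain x where x: "x \<in> l1_carrier n" "l1_norm n x \<le> 1" "a = \<bar>f x\<bar>"
      using \<open>a \<in> A\<close> by (auto simp: A_def)
    have "a \<le> max K 0 * l1_norm n x"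
      using K x l1_norm_nonneg[of n x] by (smt (verit) mult_right_mono)
    also have "\<dots> \<le> max K 0"
      using x(2) l1_norm_nonneg[of n x] by (simp add: mult_left_le)
    finally show ?thesis .
  qed
  then have bdd: "bdd_above A" by (rule bdd_aboveI)
  define t where "t = l1_norm n u"
  have t: "t > 0" using False l1_norm_nonneg[of n u] by (simp add: t_def)
  define w where "w = (\<lambda>i. (1 / t) *\<^sub>R u i)"
  have "w \<in> l1_carrier n" using u by (auto simp: w_def l1_carrier_def)
  moreover have "l1_norm n w = 1"
    using t by (simp add: l1_norm_def w_def sum_divide_distrib[symmetric] t_def)
  ultimately have "\<bar>f w\<bar> \<le> Sup A" using bdd by (auto simp: A_def intro!: cSup_upper)
  moreover have "f w = f u / t" unfolding w_def using l1_dual_scale[OF f u] by simp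
  ultimately show ?thesis
    using t by (simp add: l1_dual_norm_def A_def[symmetric] t_def[symmetric]
        pos_divide_le_eq mult.commute)
qed

lemma l1_dual_sum_coordinates:
  assumes f: "f \<in> l1_dual n" and w: "w \<in> l1_carrier n"
  shows "f w = (\<Sum>i<n. f (single i (w i)))"
proof -
  have "f (\<lambda>j. if j < m then w j else 0) = (\<Sum>i<m. f (single i (w i)))" if "m \<le> n" for m
    using that
  proof (induction m)
    case 0
    then show ?case using l1_dual_zero[OF f] by simp
  next
    case (Suc m)
    have "(\<lambda>j. if j < m then w j else 0) \<in> l1_carrier n"
      using Suc.prems by (auto simp: l1_carrier_def)
    moreover have "(\<lambda>j. if j < Suc m then w j else 0) =
        (\<lambda>j. (if j < m then w j else 0) + single m (w m) j)"
      by (auto simp: single_def)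
    ultimately show ?case
      using Suc l1_dual_add[OF f _ single_in_carrier] by simp
  qed
  moreover have "(\<lambda>j. if j < n then w j else 0) = w"
    using w by (auto simp: l1_carrier_def)
  ultimately show ?thesis by (metis order_refl)
qed

lemma Dset_nonzero:
  assumes "g \<in> Dset d" and "d \<noteq> 0"
  shows "bounded_linear g" "onorm g = norm d" "g d = (norm d)^2"
  using assms by (auto simp: Dset_def power2_eq_square)

lemma l1_Dset_dual_norm:
  assumes "f \<in> l1_Dset n z" and "0 < l1_norm n z"
  shows "l1_dual_norm n f = l1_norm n z"
  using assms by (auto simp: l1_Dset_def power2_eq_square)

text \<open>A norming functional of z attains its norm on every coordinate of z: each
  term of f z = \<Sum> f(z_i e_i) is at most ||z|| ||z_i|| and the total is ||z||^2.\<close>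

lemma l1_Dset_coordinate_value:
  assumes f: "f \<in> l1_Dset n z" and z: "z \<in> l1_carrier n" and pos: "0 < l1_norm n z"
    and i: "i < n"
  shows "f (single i (z i)) = l1_norm n z * norm (z i)"
proof -
  define L where "L = l1_norm n z"
  have fd: "f \<in> l1_dual n" and fz: "f z = L^2" using f by (auto simp: l1_Dset_def L_def)
  have term_le: "f (single j (z j)) \<le> L * norm (z j)" if "j < n" for j
    using l1_dual_bound[OF fd single_in_carrier[OF that], of "z j"]
      l1_Dset_dual_norm[OF f pos] l1_norm_single[OF that, of "z j"] by (simp add: L_def)
  have "(\<Sum>j<n. L * norm (z j) - f (single j (z j))) = L * L - f z"
    by (simp add: sum_subtractf sum_distrib_left[symmetric]
        l1_dual_sum_coordinates[OF fd z] L_def l1_norm_def)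
  also have "\<dots> = 0" using fz by (simp add: power2_eq_square)
  finally have "\<forall>j\<in>{..<n}. L * norm (z j) - f (single j (z j)) = 0"
    by (subst sum_nonneg_eq_0_iff[symmetric]) (auto simp: term_le)
  then show ?thesis using i by (simp add: L_def)
qed

lemma l1_Dset_coordinate_restriction:
  assumes f: "f \<in> l1_Dset n z" and z: "z \<in> l1_carrier n" and i: "i < n" and zi: "z i \<noteq> 0"
  shows "(\<lambda>v. norm (z i) / l1_norm n z * f (single i v)) \<in> Dset (z i)"
proof -
  define L where "L = l1_norm n z"
  define g where "g = (\<lambda>v. norm (z i) / L * f (single i v))"
  have L: "0 < L"
    using norm_coordinate_le_l1_norm[OF i, of z] zi unfolding L_def
    by (meson zero_less_norm_iff less_le_trans)
  have fd: "f \<in> l1_dual n" using f by (simp add: l1_Dset_def)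
  have g_le: "\<bar>g v\<bar> \<le> norm (z i) * norm v" for v
  proof -
    have "\<bar>f (single i v)\<bar> \<le> L * norm v"
      using l1_dual_bound[OF fd single_in_carrier[OF i], of v] l1_Dset_dual_norm[OF f]
        l1_norm_single[OF i, of v] L by (simp add: L_def)
    then have "norm (z i) / L * \<bar>f (single i v)\<bar> \<le> norm (z i) / L * (L * norm v)"
      using L by (intro mult_left_mono) auto
    also have "\<dots> = norm (z i) * norm v" using L by simp
    finally show ?thesis using L by (simp add: g_def abs_mult)
  qed
  have lin: "bounded_linear g"
    by (rule bounded_linear_intro[where K = "norm (z i)"])
      (use g_le in \<open>auto simp: g_def l1_dual_single_add[OF fd i]
          l1_dual_single_scale[OF fd i] algebra_simps add_divide_distrib\<close>)
  have gz: "g (z i) = (norm (z i))^2"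
    using l1_Dset_coordinate_value[OF f z _ i] L by (simp add: g_def L_def power2_eq_square)
  have "onorm g \<le> norm (z i)" by (rule onorm_bound) (use g_le in auto)
  moreover have "norm (g (z i)) \<le> onorm g * norm (z i)" by (rule onorm[OF lin])
  then have "norm (z i) \<le> onorm g" using gz zi by (simp add: power2_eq_square)
  ultimately have "onorm g = norm (z i)" by simp
  then show ?thesis using lin gz by (simp add: Dset_def g_def L_def power2_eq_square)
qed

lemma l1_Dset_of_coordinate:
  assumes g: "g \<in> Dset d" and d: "d \<noteq> 0" and i: "i < n"
  shows "(\<lambda>w. g (w i)) \<in> l1_Dset n (single i d)"
proof -
  note g_props = Dset_nonzero[OF g d]
  interpret g: bounded_linear g by (rule g_props(1))
  define f where "f = (\<lambda>w::nat \<Rightarrow> 'a. g (w i))"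
  have f_le: "\<bar>f w\<bar> \<le> norm d * l1_norm n w" for w
  proof -
    have "\<bar>f w\<bar> \<le> onorm g * norm (w i)" using onorm[OF g_props(1)] by (simp add: f_def)
    also have "\<dots> \<le> norm d * l1_norm n w"
      using g_props(2) norm_coordinate_le_l1_norm[OF i, of w] by (simp add: mult_left_mono)
    finally show ?thesis .
  qed
  have fd: "f \<in> l1_dual n"
    unfolding l1_dual_def using f_le by (auto simp: f_def g.add g.scale)
  have "Sup {\<bar>f w\<bar> | w. w \<in> l1_carrier n \<and> l1_norm n w \<le> 1} = norm d"
  proof (rule cSup_eq_maximum)
    define w where "w = single i ((1 / norm d) *\<^sub>R d)"
    have "\<bar>f w\<bar> = norm d"
      using d g_props(3) by (simp add: w_def single_def f_def g.scale power2_eq_square)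
    moreover have "w \<in> l1_carrier n" "l1_norm n w \<le> 1"
      using i d by (auto simp: w_def single_in_carrier l1_norm_single)
    ultimately show "norm d \<in> {\<bar>f w\<bar> | w. w \<in> l1_carrier n \<and> l1_norm n w \<le> 1}"
      by (metis (mono_tags, lifting) mem_Collect_eq)
  next
    fix t
    assume "t \<in> {\<bar>f w\<bar> | w. w \<in> l1_carrier n \<and> l1_norm n w \<le> 1}"
    then obtain w where "l1_norm n w \<le> 1" "t = \<bar>f w\<bar>" by blast
    then show "t \<le> norm d" using f_le[of w] by (smt (verit) mult_left_le norm_ge_zero)
  qed
  then have "l1_dual_norm n f = norm d" by (simp add: l1_dual_norm_def)
  moreover have "f (single i d) = (norm d)^2" using g_props(3) by (simp add: f_def single_def)
  ultimately show ?thesis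
    using fd i by (simp add: l1_Dset_def l1_norm_single f_def power2_eq_square)
qed

lemma omega_ratios_bdd_above:
  assumes lip: "C-lipschitz_on UNIV S"
  shows "bdd_above (omega_ratios S)"
proof (rule bdd_aboveI[where M = C])
  fix r
  assume "r \<in> omega_ratios S"
  then obtain a b g where ab: "a \<noteq> b" and g: "g \<in> Dset (a - b)"
    and r: "r = \<bar>g (S a - S b)\<bar> / (norm (a - b))^2"
    by (auto simp: omega_ratios_def)
  have "a - b \<noteq> 0" using ab by simp
  note g_props = Dset_nonzero[OF g this]
  have "\<bar>g (S a - S b)\<bar> \<le> onorm g * norm (S a - S b)"
    using onorm[OF g_props(1)] by simp
  also have "\<dots> \<le> norm (a - b) * (C * norm (a - b))"
    using lipschitz_onD[OF lip, of a b] g_props(2) by (simp add: dist_norm mult_left_mono)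
  finally show "r \<le> C"
    using ab by (simp add: r divide_le_eq power2_eq_square algebra_simps)
qed

lemma omega_ratios_subset_l1:
  assumes n: "0 < n"
  shows "omega_ratios S \<subseteq> l1_omega_ratios n (diag_map n S)"
proof
  fix r
  assume "r \<in> omega_ratios S"
  then obtain a b g where ab: "a \<noteq> b" and g: "g \<in> Dset (a - b)"
    and r: "r = \<bar>g (S a - S b)\<bar> / (norm (a - b))^2"
    by (auto simp: omega_ratios_def)
  define x where "x = single 0 a"
  define y where "y = single 0 b"
  have diff: "l1_diff x y = single 0 (a - b)"
    by (auto simp: l1_diff_def x_def y_def single_def)
  have "x \<in> l1_carrier n" "y \<in> l1_carrier n" "x \<noteq> y"
    using n ab single_in_carrier[OF n] by (auto simp: x_def y_def single_def fun_eq_iff)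
  moreover have "(\<lambda>w. g (w 0)) \<in> l1_Dset n (l1_diff x y)"
    using l1_Dset_of_coordinate[OF g _ n] ab diff by simp
  moreover have "l1_norm n (l1_diff x y) = norm (a - b)"
    using n by (simp add: diff l1_norm_single)
  then have "r = \<bar>g (l1_diff (diag_map n S x) (diag_map n S y) 0)\<bar> /
      (l1_norm n (l1_diff x y))^2"
    using n by (simp add: r l1_diff_def diag_map_def x_def y_def single_def)
  ultimately show "r \<in> l1_omega_ratios n (diag_map n S)"
    unfolding l1_omega_ratios_def mem_Collect_eq
    by (intro exI[of _ x] exI[of _ y] exI[of _ "\<lambda>w. g (w 0)"]) simp
qed

lemma l1_omega_ratio_le:
  assumes M: "\<forall>r\<in>omega_ratios S. r \<le> M"
    and r: "r \<in> l1_omega_ratios n (diag_map n S)"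
  shows "r \<le> M"
proof -
  obtain x y f where x: "x \<in> l1_carrier n" and y: "y \<in> l1_carrier n" and "x \<noteq> y"
    and f: "f \<in> l1_Dset n (l1_diff x y)"
    and r_eq: "r = \<bar>f (l1_diff (diag_map n S x) (diag_map n S y))\<bar> / (l1_norm n (l1_diff x y))^2"
    using r by (auto simp: l1_omega_ratios_def)
  define z where "z = l1_diff x y"
  define L where "L = l1_norm n z"
  define w where "w = l1_diff (diag_map n S x) (diag_map n S y)"
  have z: "z \<in> l1_carrier n" using x y by (auto simp: z_def l1_diff_def l1_carrier_def)
  have fd: "f \<in> l1_dual n" using f by (simp add: l1_Dset_def z_def)
  have "z \<noteq> (\<lambda>i. 0)" using \<open>x \<noteq> y\<close> by (auto simp: z_def l1_diff_def fun_eq_iff)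
  then have L: "0 < L" using l1_norm_eq_0[OF z] l1_norm_nonneg[of n z] by (auto simp: L_def)
  have coordinate_le: "\<bar>f (single i (w i))\<bar> \<le> M * L * norm (z i)" if i: "i < n" for i
  proof (cases "z i = 0")
    case True
    then show ?thesis
      using i l1_dual_single_zero[OF fd i] by (simp add: z_def w_def l1_diff_def diag_map_def)
  next
    case False
    define g where "g = (\<lambda>v. norm (z i) / L * f (single i v))"
    have g: "g \<in> Dset (x i - y i)"
      using l1_Dset_coordinate_restriction[OF f[folded z_def] z i False]
      by (simp add: g_def L_def z_def l1_diff_def)
    have "\<bar>g (S (x i) - S (y i))\<bar> / (norm (x i - y i))^2 \<le> M"
      using M g False by (auto simp: omega_ratios_def z_def l1_diff_def)
    then have "norm (z i) / L * \<bar>f (single i (w i))\<bar> \<le> M * (norm (z i))^2"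
      using False i L
      by (simp add: g_def w_def z_def l1_diff_def diag_map_def abs_mult divide_le_eq mult_ac)
    then have "norm (z i) * \<bar>f (single i (w i))\<bar> \<le> norm (z i) * (M * L * norm (z i))"
      using L by (simp add: field_simps power2_eq_square)
    then show ?thesis using False by simp
  qed
  have w: "w \<in> l1_carrier n" by (auto simp: w_def l1_diff_def diag_map_def l1_carrier_def)
  have "\<bar>f w\<bar> \<le> (\<Sum>i<n. \<bar>f (single i (w i))\<bar>)"
    unfolding l1_dual_sum_coordinates[OF fd w] by (rule sum_abs)
  also have "\<dots> \<le> (\<Sum>i<n. M * L * norm (z i))" by (rule sum_mono) (simp add: coordinate_le)
  also have "\<dots> = M * L^2"
    by (simp add: sum_distrib_left[symmetric] L_def l1_norm_def power2_eq_square)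
  finally show "r \<le> M"
    using L by (simp add: r_eq w_def z_def[symmetric] L_def[symmetric] divide_le_eq)
qed

theorem lemma4p6:
  fixes S :: "'a::banach \<Rightarrow> 'a" and n :: nat
  assumes "n \<ge> 1" and "S \<in> Lip0"
  shows "l1_omega n (diag_map n S) = omega S"
proof -
  obtain C where "C-lipschitz_on UNIV S" using assms(2) by (auto simp: Lip0_def)
  then have "bdd_above (omega_ratios S)" by (rule omega_ratios_bdd_above)
  moreover have "omega_ratios S \<subseteq> l1_omega_ratios n (diag_map n S)"
    using assms(1) by (intro omega_ratios_subset_l1) simp
  ultimately have "Sup (omega_ratios S) = Sup (l1_omega_ratios n (diag_map n S))"
    using l1_omega_ratio_le by (intro Sup_eq_if_same_upper_bounds) blast+
  then show ?thesis by (simp add: omega_eq_Sup l1_omega_eq_Sup)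
qed

end
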